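(* For every $\Gamma \in \mathrm{WR}(\Lambda_h)$, $$\cos\theta(\Gamma) = \frac{p}{q} \le \frac12, \qquad \sin\theta(\Gamma) = \frac{r}{q}\sqrt3 \ge \frac{\sqrt3}{2},$$ for some relatively prime triple $(p,r,q) \in \mathbb{Z}^3_{\ge 0}$.
   Context: $\Lambda_h = \begin{bmatrix} 1 & -1/2 \\ 0 & \sqrt3/2\end{bmatrix}\mathbb{Z}^2$ is the hexagonal lattice. For a full-rank lattice $\Gamma\subset\mathbb{R}^2$, $|\Gamma| = \min\{\|y\|^2 : y\in\Gamma\setminus\{0\}\}$; $\Gamma$ is well-rounded (WR) if it has a basis of vectors $y$ with $\|y\|^2=|\Gamma|$ (a minimal basis); such a basis can be chosen with the angle between its vectors in $[\pi/3,\pi/2]$, and this angle, denoted $\theta(\Gamma)$, is an invariant of $\Gamma$. $\mathrm{WR}(\Lambda_h)$ is the set of full-rank WR sublattices of $\Lambda_h$. *)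

theory Defs
  imports "HOL-Analysis.Analysis"
begin

definition hex_lattice :: "(real \<times> real) set" where
  "hex_lattice = {(of_int m - of_int n / 2, of_int n * sqrt 3 / 2) | m n :: int. True}"

definition lattice_gen :: "real \<times> real \<Rightarrow> real \<times> real \<Rightarrow> (real \<times> real) set" where
  "lattice_gen u v = {of_int a *\<^sub>R u + of_int b *\<^sub>R v | a b :: int. True}"

definition lin_indep2 :: "real \<times> real \<Rightarrow> real \<times> real \<Rightarrow> bool" where
  "lin_indep2 u v \<longleftrightarrow> fst u * snd v - snd u * fst v \<noteq> 0"

definition lattice_basis :: "(real \<times> real) set \<Rightarrow> real \<times> real \<Rightarrow> real \<times> real \<Rightarrow> bool" where
  "lattice_basis L u v \<longleftrightarrow> lin_indep2 u v \<and> L = lattice_gen u v"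

definition full_rank_lattice :: "(real \<times> real) set \<Rightarrow> bool" where
  "full_rank_lattice L \<longleftrightarrow> (\<exists>u v. lattice_basis L u v)"

definition lattice_min :: "(real \<times> real) set \<Rightarrow> real" where
  "lattice_min L = Inf {(norm y)\<^sup>2 | y. y \<in> L - {0}}"

definition minimal_basis :: "(real \<times> real) set \<Rightarrow> real \<times> real \<Rightarrow> real \<times> real \<Rightarrow> bool" where
  "minimal_basis L u v \<longleftrightarrow> lattice_basis L u v \<and>
     (norm u)\<^sup>2 = lattice_min L \<and> (norm v)\<^sup>2 = lattice_min L"

definition well_rounded :: "(real \<times> real) set \<Rightarrow> bool" where
  "well_rounded L \<longleftrightarrow> full_rank_lattice L \<and> (\<exists>u v. minimal_basis L u v)"

definition vangle :: "real \<times> real \<Rightarrow> real \<times> real \<Rightarrow> real" where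
  "vangle u v = arccos (inner u v / (norm u * norm v))"

definition wr_theta :: "(real \<times> real) set \<Rightarrow> real" where
  "wr_theta L = (THE t. pi / 3 \<le> t \<and> t \<le> pi / 2 \<and>
      (\<exists>u v. minimal_basis L u v \<and> vangle u v = t))"

definition WR_hex :: "(real \<times> real) set set" where
  "WR_hex = {L. L \<subseteq> hex_lattice \<and> full_rank_lattice L \<and> well_rounded L}"

end

theory Submission
  imports Defs
begin

text \<open>
  For a minimal basis \<open>u, v\<close> of a lattice with minimum \<open>m\<close>, the angle between them has
  cosine \<open>\<langle>u,v\<rangle>/m\<close> and sine \<open>|det(u,v)|/m\<close>. The determinant of a basis is a lattice
  invariant up to sign, so by Lagrange's identity \<open>\<langle>u,v\<rangle>\<^sup>2 = m\<^sup>2 - det(u,v)\<^sup>2\<close> the angle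
  does not depend on the minimal basis. In the hexagonal lattice, twice an inner product is an
  integer and twice a determinant is an integer multiple of \<open>\<surd>3\<close>, so both \<open>cos \<theta>\<close> and
  \<open>sin \<theta> / \<surd>3\<close> are quotients of integers by the integer \<open>2m\<close>; clearing common factors gives
  the coprime triple.
\<close>

definition det2 :: "real \<times> real \<Rightarrow> real \<times> real \<Rightarrow> real" where
  "det2 u v = fst u * snd v - snd u * fst v"

lemma inner_real_pair: "inner (u::real \<times> real) v = fst u * fst v + snd u * snd v"
  by (cases u; cases v) simp

lemma inner_square_minus_det2_square:
  "inner u u * inner v v - (inner u v)\<^sup>2 = (det2 u v)\<^sup>2"
  by (simp add: inner_real_pair det2_def power2_eq_square algebra_simps)

lemma det2_lincomb: "det2 (a *\<^sub>R u + b *\<^sub>R v) (c *\<^sub>R u + d *\<^sub>R v) = (a * d - b * c) * det2 u v"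
  by (simp add: det2_def algebra_simps)

lemma lattice_gen_memI: "of_int a *\<^sub>R u + of_int b *\<^sub>R v \<in> lattice_gen u v"
  unfolding lattice_gen_def by blast

lemma lattice_gen_uminus_right: "lattice_gen u (- v) = lattice_gen u v"
proof (rule set_eqI, rule iffI)
  fix x assume "x \<in> lattice_gen u (- v)"
  then obtain a b :: int where "x = of_int a *\<^sub>R u + of_int b *\<^sub>R (- v)"
    unfolding lattice_gen_def by blast
  then have "x = of_int a *\<^sub>R u + of_int (- b) *\<^sub>R v" by simp
  then show "x \<in> lattice_gen u v" by (simp only: lattice_gen_memI)
next
  fix x assume "x \<in> lattice_gen u v"
  then obtain a b :: int where "x = of_int a *\<^sub>R u + of_int b *\<^sub>R v"
    unfolding lattice_gen_def by blast
  then have "x = of_int a *\<^sub>R u + of_int (- b) *\<^sub>R (- v)" by simp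
  then show "x \<in> lattice_gen u (- v)" by (simp only: lattice_gen_memI)
qed

lemma lattice_basis_det2_nonzero: "lattice_basis L u v \<Longrightarrow> det2 u v \<noteq> 0"
  by (simp add: lattice_basis_def lin_indep2_def det2_def)

lemma lattice_basis_mem:
  assumes "lattice_basis L u v"
  shows "u \<in> L" "v \<in> L" "u - v \<in> L" "u + v \<in> L"
  using lattice_gen_memI[of 1 u 0 v] lattice_gen_memI[of 0 u 1 v]
    lattice_gen_memI[of 1 u "-1" v] lattice_gen_memI[of 1 u 1 v] assms
  by (simp_all add: lattice_basis_def)

lemma lattice_basis_nonzero:
  assumes "lattice_basis L u v"
  shows "u \<noteq> 0" "u - v \<noteq> 0" "u + v \<noteq> 0"
  using lattice_basis_det2_nonzero[OF assms]
  by (cases u; cases v; auto simp: det2_def zero_prod_def add_eq_0_iff)+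

lemma lattice_min_le:
  assumes "y \<in> L" "y \<noteq> 0"
  shows "lattice_min L \<le> (norm y)\<^sup>2"
  unfolding lattice_min_def
proof (rule cInf_lower)
  show "(norm y)\<^sup>2 \<in> {(norm y)\<^sup>2 |y. y \<in> L - {0}}" using assms by blast
  show "bdd_below {(norm y)\<^sup>2 |y. y \<in> L - {0}}" by (rule bdd_belowI[of _ 0]) auto
qed

text \<open>Any two bases of a lattice differ by a unimodular integer matrix.\<close>
lemma lattice_basis_det2_square_eq:
  assumes "lattice_basis L u v" "lattice_basis L u' v'"
  shows "(det2 u' v')\<^sup>2 = (det2 u v)\<^sup>2"
proof -
  have det2_multiple: "\<exists>k::int. det2 x' y' = of_int k * det2 x y"
    if "lattice_basis L x y" "lattice_basis L x' y'" for x y x' y'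
  proof -
    have "x' \<in> lattice_gen x y" "y' \<in> lattice_gen x y"
      using that lattice_basis_mem(1,2)[OF that(2)] by (simp_all add: lattice_basis_def)
    then obtain a b c d :: int where
      "x' = of_int a *\<^sub>R x + of_int b *\<^sub>R y" "y' = of_int c *\<^sub>R x + of_int d *\<^sub>R y"
      unfolding lattice_gen_def by blast
    then show ?thesis by (intro exI[of _ "a * d - b * c"]) (simp add: det2_lincomb)
  qed
  obtain k where k: "det2 u' v' = of_int k * det2 u v" using det2_multiple assms by blast
  obtain k' where k': "det2 u v = of_int k' * det2 u' v'" using det2_multiple assms by blast
  have "of_int (k' * k) * det2 u v = det2 u v" using k k' by (simp add: mult.assoc)
  then have "k' * k = 1"
    using lattice_basis_det2_nonzero[OF assms(1)] by (metis mult_cancel_right2 of_int_eq_1_iff)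
  then have "k = 1 \<or> k = -1" by (auto simp: zmult_eq_1_iff)
  then show ?thesis using k by auto
qed

lemma minimal_basis_uminus_right: "minimal_basis L u v \<Longrightarrow> minimal_basis L u (- v)"
  by (simp add: minimal_basis_def lattice_basis_def lin_indep2_def lattice_gen_uminus_right)

lemma minimal_basis_inner:
  assumes "minimal_basis L u v"
  shows "inner u u = lattice_min L" "inner v v = lattice_min L" "lattice_min L > 0"
    and "\<bar>inner u v\<bar> \<le> lattice_min L / 2"
proof -
  define m where "m = lattice_min L"
  have b: "lattice_basis L u v" using assms by (simp add: minimal_basis_def)
  show uu: "inner u u = lattice_min L" and vv: "inner v v = lattice_min L"
    using assms by (simp_all add: minimal_basis_def power2_norm_eq_inner)
  then show "lattice_min L > 0" using lattice_basis_nonzero(1)[OF b] by (metis inner_gt_zero_iff)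
  text \<open>Minimality against the lattice vectors \<open>u \<plusminus> v\<close>.\<close>
  have "m \<le> (norm (u - v))\<^sup>2" "m \<le> (norm (u + v))\<^sup>2"
    using lattice_min_le lattice_basis_mem(3,4)[OF b] lattice_basis_nonzero(2,3)[OF b]
    by (simp_all add: m_def)
  then show "\<bar>inner u v\<bar> \<le> lattice_min L / 2"
    using uu vv by (simp add: power2_norm_eq_inner algebra_simps inner_commute m_def)
qed

lemma minimal_basis_norm_mult:
  assumes "minimal_basis L u v"
  shows "norm u * norm v = lattice_min L"
proof -
  have "(norm u)\<^sup>2 = lattice_min L" "(norm v)\<^sup>2 = lattice_min L"
    using assms by (simp_all add: minimal_basis_def)
  then have "norm u = norm v" by (metis norm_ge_zero power2_eq_iff_nonneg)
  with \<open>(norm u)\<^sup>2 = lattice_min L\<close> show ?thesis by (simp add: power2_eq_square)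
qed

lemma cos_vangle_minimal_basis:
  assumes "minimal_basis L u v"
  shows "cos (vangle u v) = inner u v / lattice_min L"
  using minimal_basis_inner[OF assms]
  by (simp add: vangle_def minimal_basis_norm_mult[OF assms] cos_arccos_abs)

lemma sin_vangle_minimal_basis:
  assumes "minimal_basis L u v"
  shows "sin (vangle u v) = \<bar>det2 u v\<bar> / lattice_min L"
proof -
  define m where "m = lattice_min L"
  note mb = minimal_basis_inner[OF assms, folded m_def]
  have "\<bar>inner u v / m\<bar> \<le> 1" using mb by simp
  moreover have "1 - (inner u v / m)\<^sup>2 = (\<bar>det2 u v\<bar> / m)\<^sup>2"
  proof -
    have det: "m\<^sup>2 - (inner u v)\<^sup>2 = (det2 u v)\<^sup>2"
      using inner_square_minus_det2_square[of u v] mb by (simp add: power2_eq_square)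
    have "1 - (inner u v / m)\<^sup>2 = (m\<^sup>2 - (inner u v)\<^sup>2) / m\<^sup>2"
      using mb(3) by (simp add: field_simps)
    also have "\<dots> = (\<bar>det2 u v\<bar> / m)\<^sup>2"
      using det by (simp add: power_divide)
    finally show ?thesis .
  qed
  ultimately show ?thesis
    using mb by (simp add: vangle_def minimal_basis_norm_mult[OF assms] sin_arccos_abs
        flip: m_def)
qed

lemma vangle_minimal_basis_bounds:
  assumes "minimal_basis L u v" "inner u v \<ge> 0"
  shows "pi / 3 \<le> vangle u v" "vangle u v \<le> pi / 2"
proof -
  note mb = minimal_basis_inner[OF assms(1)]
  have c: "0 \<le> inner u v / lattice_min L" "inner u v / lattice_min L \<le> 1 / 2"
    using mb assms(2) by (simp_all add: field_simps)
  have "arccos (1 / 2) \<le> arccos (inner u v / lattice_min L)"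
    "arccos (inner u v / lattice_min L) \<le> arccos 0"
    using c by (intro arccos_le_arccos; linarith)+
  then show "pi / 3 \<le> vangle u v" "vangle u v \<le> pi / 2"
    by (simp_all add: vangle_def minimal_basis_norm_mult[OF assms(1)] arccos_one_half)
qed

lemma minimal_basis_inner_square_eq:
  assumes "minimal_basis L u v" "minimal_basis L u' v'"
  shows "(inner u' v')\<^sup>2 = (inner u v)\<^sup>2"
proof -
  have "lattice_basis L u v" "lattice_basis L u' v'" using assms by (simp_all add: minimal_basis_def)
  then have "(det2 u' v')\<^sup>2 = (det2 u v)\<^sup>2" by (rule lattice_basis_det2_square_eq)
  then show ?thesis
    using inner_square_minus_det2_square[of u v] inner_square_minus_det2_square[of u' v']
      minimal_basis_inner(1,2)[OF assms(1)] minimal_basis_inner(1,2)[OF assms(2)]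
    by simp
qed

lemma wr_theta_eq_vangle:
  assumes "minimal_basis L u v" "inner u v \<ge> 0"
  shows "wr_theta L = vangle u v"
  unfolding wr_theta_def
proof (rule the_equality)
  show "pi / 3 \<le> vangle u v \<and> vangle u v \<le> pi / 2 \<and>
      (\<exists>u' v'. minimal_basis L u' v' \<and> vangle u' v' = vangle u v)"
    using vangle_minimal_basis_bounds[OF assms] assms(1) by blast
next
  fix t assume "pi / 3 \<le> t \<and> t \<le> pi / 2 \<and> (\<exists>u' v'. minimal_basis L u' v' \<and> vangle u' v' = t)"
  then obtain u' v' where t: "pi / 3 \<le> t" "t \<le> pi / 2" and mb': "minimal_basis L u' v'"
    and t_def: "t = vangle u' v'"
    by blast
  text \<open>An angle in \<open>[0, \<pi>/2]\<close> forces a nonnegative inner product, hence equal inner products.\<close>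
  have "0 \<le> inner u' v' / lattice_min L"
    using cos_ge_zero[of t] t pi_gt_zero cos_vangle_minimal_basis[OF mb'] t_def by simp
  then have "inner u' v' \<ge> 0" using minimal_basis_inner(3)[OF mb'] by (simp add: zero_le_divide_iff)
  then have "inner u' v' = inner u v"
    using minimal_basis_inner_square_eq[OF assms(1) mb'] assms(2) power2_eq_iff_nonneg by blast
  then show "t = vangle u v"
    by (simp add: t_def vangle_def minimal_basis_norm_mult[OF mb'] minimal_basis_norm_mult[OF assms(1)])
qed

lemma well_rounded_obtain_theta_basis:
  assumes "well_rounded L"
  obtains u v where "minimal_basis L u v" "inner u v \<ge> 0" "wr_theta L = vangle u v"
proof -
  obtain u v where mb: "minimal_basis L u v" using assms by (auto simp: well_rounded_def)
  show ?thesis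
  proof (cases "inner u v \<ge> 0")
    case True then show ?thesis using that mb wr_theta_eq_vangle by blast
  next
    case False
    then show ?thesis
      using that wr_theta_eq_vangle minimal_basis_uminus_right[OF mb] by simp
  qed
qed

lemma hex_latticeE:
  assumes "y \<in> hex_lattice"
  obtains a b :: int where "y = (of_int a - of_int b / 2, of_int b * sqrt 3 / 2)"
  using assms by (auto simp: hex_lattice_def)

lemma hex_lattice_inner_int:
  assumes "u \<in> hex_lattice" "v \<in> hex_lattice"
  shows "\<exists>k::int. 2 * inner u v = of_int k"
proof -
  obtain a b :: int where "u = (of_int a - of_int b / 2, of_int b * sqrt 3 / 2)"
    using assms(1) by (rule hex_latticeE)
  moreover obtain c d :: int where "v = (of_int c - of_int d / 2, of_int d * sqrt 3 / 2)"
    using assms(2) by (rule hex_latticeE)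
  ultimately have "2 * inner u v = of_int (2*a*c + 2*b*d - a*d - b*c)"
    by (simp add: inner_real_pair field_simps)
  then show ?thesis by blast
qed

lemma hex_lattice_det2_int:
  assumes "u \<in> hex_lattice" "v \<in> hex_lattice"
  shows "\<exists>k::int. 2 * det2 u v = of_int k * sqrt 3"
proof -
  obtain a b :: int where "u = (of_int a - of_int b / 2, of_int b * sqrt 3 / 2)"
    using assms(1) by (rule hex_latticeE)
  moreover obtain c d :: int where "v = (of_int c - of_int d / 2, of_int d * sqrt 3 / 2)"
    using assms(2) by (rule hex_latticeE)
  ultimately have "2 * det2 u v = of_int (a*d - b*c) * sqrt 3"
    by (simp add: det2_def field_simps)
  then show ?thesis by blast
qed

lemma exists_coprime_triple_same_ratios:
  fixes x y z :: int
  assumes "x \<ge> 0" "y \<ge> 0" "z > 0"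
  shows "\<exists>p r q :: int. p \<ge> 0 \<and> r \<ge> 0 \<and> q \<ge> 0 \<and> gcd p (gcd r q) = 1 \<and>
    of_int x / of_int z = (of_int p / of_int q :: real) \<and> of_int y / of_int z = (of_int r / of_int q :: real)"
proof -
  define g where "g = gcd x (gcd y z)"
  have g: "g > 0" "g dvd x" "g dvd y" "g dvd z"
    using assms(3) by (auto simp: g_def intro: dvd_trans)
  have "g = gcd (g * (x div g)) (gcd (g * (y div g)) (g * (z div g)))"
    using g by (simp add: g_def)
  also have "\<dots> = g * gcd (x div g) (gcd (y div g) (z div g))"
    using g(1) by (simp add: gcd_mult_distrib_int[symmetric])
  finally have "g = g * gcd (x div g) (gcd (y div g) (z div g))" .
  then have "gcd (x div g) (gcd (y div g) (z div g)) = 1" using g(1) by simp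
  moreover have "of_int w / of_int z = (of_int (w div g) / of_int (z div g) :: real)" if "g dvd w" for w
    using g that by (simp add: real_of_int_div)
  ultimately show ?thesis
    using g assms by (intro exI[of _ "x div g"] exI[of _ "y div g"] exI[of _ "z div g"])
      (simp add: pos_imp_zdiv_nonneg_iff)
qed

theorem lemma3p1:
  assumes "\<Gamma> \<in> WR_hex"
  shows "\<exists>p r q :: int. p \<ge> 0 \<and> r \<ge> 0 \<and> q \<ge> 0 \<and> gcd p (gcd r q) = 1 \<and>
           cos (wr_theta \<Gamma>) = of_int p / of_int q \<and> of_int p / of_int q \<le> (1/2::real) \<and>
           sin (wr_theta \<Gamma>) = of_int r / of_int q * sqrt 3 \<and>
           of_int r / of_int q * sqrt 3 \<ge> sqrt 3 / (2::real)"
proof -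
  have hex: "\<Gamma> \<subseteq> hex_lattice" and "well_rounded \<Gamma>" using assms by (auto simp: WR_hex_def)
  obtain u v where mb: "minimal_basis \<Gamma> u v" and uv: "inner u v \<ge> 0"
    and theta: "wr_theta \<Gamma> = vangle u v"
    using \<open>well_rounded \<Gamma>\<close> by (rule well_rounded_obtain_theta_basis)
  have "lattice_basis \<Gamma> u v" using mb by (simp add: minimal_basis_def)
  then have "u \<in> hex_lattice" "v \<in> hex_lattice" using hex lattice_basis_mem(1,2) by blast+
  then obtain I N D :: int where I: "2 * inner u v = of_int I" and N: "2 * inner u u = of_int N"
    and D: "2 * det2 u v = of_int D * sqrt 3"
    using hex_lattice_inner_int[of u v] hex_lattice_inner_int[of u u] hex_lattice_det2_int[of u v]
    by blast
  note m = minimal_basis_inner(1,3)[OF mb]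
  have "cos (wr_theta \<Gamma>) = 2 * inner u v / (2 * inner u u)"
    using cos_vangle_minimal_basis[OF mb] theta m(1) by simp
  then have cos: "cos (wr_theta \<Gamma>) = of_int I / of_int N" by (simp only: I N)
  have "sin (wr_theta \<Gamma>) = \<bar>2 * det2 u v\<bar> / (2 * inner u u)"
    using sin_vangle_minimal_basis[OF mb] theta m(1) by simp
  then have sin: "sin (wr_theta \<Gamma>) = of_int \<bar>D\<bar> / of_int N * sqrt 3"
    by (simp only: D N) (simp add: abs_mult)
  have "I \<ge> 0" "N > 0" using I N uv m by linarith+
  then obtain p r q where "p \<ge> 0" "r \<ge> 0" "q \<ge> 0" "gcd p (gcd r q) = 1"
    and "of_int I / of_int N = (of_int p / of_int q :: real)"
    and "of_int \<bar>D\<bar> / of_int N = (of_int r / of_int q :: real)"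
    using exists_coprime_triple_same_ratios[of I "\<bar>D\<bar>" N] by auto
  moreover have "cos (wr_theta \<Gamma>) \<le> 1 / 2" "sqrt 3 / 2 \<le> sin (wr_theta \<Gamma>)"
    using vangle_minimal_basis_bounds[OF mb uv] theta cos_monotone_0_pi_le[of "pi / 3"]
      sin_monotone_2pi_le[of "pi / 3"] by (simp_all add: cos_60 sin_60)
  ultimately show ?thesis using cos sin by (intro exI[of _ p] exI[of _ r] exI[of _ q]) simp
qed

end
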